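(* Let $G$ be a directed graph with vertices $s,t$ and $k\ge1$. For any $C_1,C_2\in L^*$ we have $|E(C_1\vee C_2)|+|E(C_1\wedge C_2)|\ge|E(C_1)|+|E(C_2)|$.
   Context: An $s$-$t$ cut of a directed graph $G$ is a set $X\subseteq E(G)$ such that removing $X$ leaves no directed $s$-$t$ path; $\Gamma_G(s,t)$ is the set of $s$-$t$ cuts of minimum cardinality. Fix a maximum-size collection $\mathcal P$ of pairwise edge-disjoint directed $s$-$t$ paths (each minimum $s$-$t$ cut contains exactly one edge of each path in $\mathcal P$). For $X,Y\in\Gamma_G(s,t)$, $S_{\min}(X\cup Y)$ (resp. $S_{\max}(X\cup Y)$) consists, for each $p\in\mathcal P$, of the edge of $(X\cup Y)\cap p$ occurring first (resp. last) along $p$. $X\le Y$ means every directed $s$-$t$ path meets an edge of $X$ at or before an edge of $Y$. $U^k_{\mathrm{lr}}$ is the set of $k$-tuples $[X_1,\dots,X_k]$ of elements of $\Gamma_G(s,t)$ with $X_i\le X_j$ for all $i<j$. $L^*$ is the lattice on $U^k_{\mathrm{lr}}$ with componentwise order, join $[X_i]_i\vee[Y_i]_i=[S_{\max}(X_i\cup Y_i)]_i$ and meet $[X_i]_i\wedge[Y_i]_i=[S_{\min}(X_i\cup Y_i)]_i$. For $C=[X_1,\dots,X_k]$, $E(C)=\bigcup_{i=1}^kX_i$. *)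

theory Defs
  imports Main
begin

text \<open>A finite directed multigraph is given by a finite edge set E together with
  tail and head maps.\<close>

definition is_path :: "'e set \<Rightarrow> ('e \<Rightarrow> 'v) \<Rightarrow> ('e \<Rightarrow> 'v) \<Rightarrow> 'v \<Rightarrow> 'v \<Rightarrow> 'e list \<Rightarrow> bool" where
  "is_path E src tgt s t p \<longleftrightarrow>
     p \<noteq> [] \<and> set p \<subseteq> E \<and>
     src (p ! 0) = s \<and> tgt (last p) = t \<and>
     (\<forall>i. Suc i < length p \<longrightarrow> tgt (p ! i) = src (p ! Suc i)) \<and>
     distinct (src (p ! 0) # map tgt p)"

definition is_cut :: "'e set \<Rightarrow> ('e \<Rightarrow> 'v) \<Rightarrow> ('e \<Rightarrow> 'v) \<Rightarrow> 'v \<Rightarrow> 'v \<Rightarrow> 'e set \<Rightarrow> bool" where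
  "is_cut E src tgt s t X \<longleftrightarrow> X \<subseteq> E \<and> (\<forall>p. is_path E src tgt s t p \<longrightarrow> set p \<inter> X \<noteq> {})"

definition min_cuts :: "'e set \<Rightarrow> ('e \<Rightarrow> 'v) \<Rightarrow> ('e \<Rightarrow> 'v) \<Rightarrow> 'v \<Rightarrow> 'v \<Rightarrow> 'e set set" where
  "min_cuts E src tgt s t =
     {X. is_cut E src tgt s t X \<and> (\<forall>Y. is_cut E src tgt s t Y \<longrightarrow> card X \<le> card Y)}"

definition disjoint_paths :: "'e set \<Rightarrow> ('e \<Rightarrow> 'v) \<Rightarrow> ('e \<Rightarrow> 'v) \<Rightarrow> 'v \<Rightarrow> 'v \<Rightarrow> 'e list set \<Rightarrow> bool" where
  "disjoint_paths E src tgt s t P \<longleftrightarrow>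
     (\<forall>p\<in>P. is_path E src tgt s t p) \<and>
     (\<forall>p\<in>P. \<forall>q\<in>P. p \<noteq> q \<longrightarrow> set p \<inter> set q = {})"

definition max_disjoint_paths :: "'e set \<Rightarrow> ('e \<Rightarrow> 'v) \<Rightarrow> ('e \<Rightarrow> 'v) \<Rightarrow> 'v \<Rightarrow> 'v \<Rightarrow> 'e list set \<Rightarrow> bool" where
  "max_disjoint_paths E src tgt s t P \<longleftrightarrow>
     disjoint_paths E src tgt s t P \<and>
     (\<forall>Q. disjoint_paths E src tgt s t Q \<longrightarrow> card Q \<le> card P)"

definition S_min :: "'e list set \<Rightarrow> 'e set \<Rightarrow> 'e set" where
  "S_min P Z = {List.hd (filter (\<lambda>e. e \<in> Z) p) | p. p \<in> P \<and> set p \<inter> Z \<noteq> {}}"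

definition S_max :: "'e list set \<Rightarrow> 'e set \<Rightarrow> 'e set" where
  "S_max P Z = {last (filter (\<lambda>e. e \<in> Z) p) | p. p \<in> P \<and> set p \<inter> Z \<noteq> {}}"

definition cut_le :: "'e set \<Rightarrow> ('e \<Rightarrow> 'v) \<Rightarrow> ('e \<Rightarrow> 'v) \<Rightarrow> 'v \<Rightarrow> 'v \<Rightarrow> 'e set \<Rightarrow> 'e set \<Rightarrow> bool" where
  "cut_le E src tgt s t X Y \<longleftrightarrow>
     (\<forall>p. is_path E src tgt s t p \<longrightarrow>
        (\<exists>i<length p. p ! i \<in> X \<and> (\<forall>j<i. p ! j \<notin> Y)))"

definition U_lr :: "'e set \<Rightarrow> ('e \<Rightarrow> 'v) \<Rightarrow> ('e \<Rightarrow> 'v) \<Rightarrow> 'v \<Rightarrow> 'v \<Rightarrow> nat \<Rightarrow> 'e set list set" where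
  "U_lr E src tgt s t k =
     {C. length C = k \<and> (\<forall>X\<in>set C. X \<in> min_cuts E src tgt s t) \<and>
         (\<forall>i j. i < j \<longrightarrow> j < k \<longrightarrow> cut_le E src tgt s t (C ! i) (C ! j))}"

definition cjoin :: "'e list set \<Rightarrow> 'e set list \<Rightarrow> 'e set list \<Rightarrow> 'e set list" where
  "cjoin P C D = map2 (\<lambda>X Y. S_max P (X \<union> Y)) C D"

definition cmeet :: "'e list set \<Rightarrow> 'e set list \<Rightarrow> 'e set list \<Rightarrow> 'e set list" where
  "cmeet P C D = map2 (\<lambda>X Y. S_min P (X \<union> Y)) C D"

definition edges_of :: "'e set list \<Rightarrow> 'e set" where
  "edges_of C = \<Union> (set C)"

end

(* Menger's theorem, proved via augmenting paths for unit capacities (flows are edge sets),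
   says that a minimum s-t cut has at most |P| edges. Every path of P meets every cut and the
   paths of P are edge-disjoint, so a minimum cut consists of exactly one edge on each path of P
   and of no other edge.

   Hence for C = [X_1,...,X_k] in U^k_lr and a path p of P, each X_i meets p in a single edge, at
   position a_i say; the order X_i <= X_j makes a monotone, and the number of edges of E(C) on p
   is the number of distinct values of a. On p, join and meet take the pointwise maximum and
   minimum of the position sequences a and b of C_1 and C_2. The number of distinct values of a
   monotone sequence is one plus the number of steps at which it strictly increases, and at each
   step an increase of a or of b forces an increase of max(a,b) or of min(a,b), while an increase
   of both forces both. This proves the inequality on each path of P, and summing over P, which
   covers all edges involved, proves it in general. *)

theory Submission
  imports Defs "HOL-Library.Transitive_Closure_Table" "HOL-Library.Disjoint_Sets"
begin

lemma last_filter_eq_nth: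
  assumes "i < length xs" "P (xs ! i)" "\<And>j. i < j \<Longrightarrow> j < length xs \<Longrightarrow> \<not> P (xs ! j)"
  shows "last (filter P xs) = xs ! i"
proof -
  have "\<not> P x" if "x \<in> set (drop (Suc i) xs)" for x
    using that assms(3) by (auto simp: in_set_conv_nth)
  then have "filter P (drop (Suc i) xs) = []" by (simp add: filter_empty_conv)
  then have "filter P (take i xs @ xs ! i # drop (Suc i) xs) = filter P (take i xs) @ [xs ! i]"
    using assms(2) by simp
  then show ?thesis by (simp flip: id_take_nth_drop[OF assms(1)])
qed

lemma hd_filter_eq_nth:
  assumes "i < length xs" "P (xs ! i)" "\<And>j. j < i \<Longrightarrow> \<not> P (xs ! j)"
  shows "hd (filter P xs) = xs ! i"
proof -
  have "\<not> P x" if "x \<in> set (take i xs)" for x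
    using that assms(3) by (auto simp: in_set_conv_nth)
  then have "filter P (take i xs) = []" by (simp add: filter_empty_conv)
  then have "filter P (take i xs @ xs ! i # drop (Suc i) xs) = xs ! i # filter P (drop (Suc i) xs)"
    using assms(2) by simp
  then show ?thesis by (simp flip: id_take_nth_drop[OF assms(1)])
qed

lemma last_filter_in_set:
  assumes "\<exists>x\<in>set xs. P x"
  shows "last (filter P xs) \<in> set xs"
proof -
  have "filter P xs \<noteq> []" using assms by (simp add: filter_empty_conv)
  then have "last (filter P xs) \<in> set (filter P xs)" by (rule last_in_set)
  then show ?thesis by simp
qed

lemma hd_filter_in_set:
  assumes "\<exists>x\<in>set xs. P x"
  shows "hd (filter P xs) \<in> set xs"
proof -
  have "filter P xs \<noteq> []" using assms by (simp add: filter_empty_conv)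
  then have "hd (filter P xs) \<in> set (filter P xs)" by (rule hd_in_set)
  then show ?thesis by simp
qed

lemma distinct_nth_mem_iff:
  assumes "distinct xs" "i < length xs" "j < length xs" "X \<inter> set xs = {xs ! i}"
  shows "xs ! j \<in> X \<longleftrightarrow> j = i"
proof -
  have "xs ! j \<in> X \<longleftrightarrow> xs ! j = xs ! i"
    using assms(4) nth_mem[OF assms(3)] by (metis Int_iff singletonD singletonI)
  also have "\<dots> \<longleftrightarrow> j = i" using assms(1-3) by (simp add: nth_eq_iff_index_eq)
  finally show ?thesis .
qed

lemma disjoint_family_on_select_Int:
  assumes "disjoint_family_on A I" "i \<in> I" "Q i" "\<And>j. j \<in> I \<Longrightarrow> Q j \<Longrightarrow> f j \<in> A j"
  shows "{f j |j. j \<in> I \<and> Q j} \<inter> A i = {f i}"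
proof (intro equalityI subsetI)
  fix x assume "x \<in> {f j |j. j \<in> I \<and> Q j} \<inter> A i"
  then obtain j where "j \<in> I" "Q j" "x = f j" "x \<in> A i" by auto
  then have "j = i" using assms(1,2,4) unfolding disjoint_family_on_def by (metis disjoint_iff)
  then show "x \<in> {f i}" using \<open>x = f j\<close> by simp
qed (use assms in auto)

lemma card_eq_sum_card_Int_disjoint_family:
  assumes "finite I" "disjoint_family_on A I" "\<And>i. i \<in> I \<Longrightarrow> finite (A i)" "Z \<subseteq> \<Union> (A ` I)"
  shows "card Z = (\<Sum>i\<in>I. card (Z \<inter> A i))"
proof -
  have "Z = (\<Union>i\<in>I. Z \<inter> A i)" using assms(4) by blast
  also have "card \<dots> = (\<Sum>i\<in>I. card (Z \<inter> A i))"
    using assms(1-3) unfolding disjoint_family_on_def by (intro card_UN_disjoint) auto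
  finally show ?thesis .
qed

lemma card_Int_eq_card_positions:
  assumes "distinct p" "\<And>i. i < k \<Longrightarrow> f i < length p" "\<And>i. i < k \<Longrightarrow> A i \<inter> set p = {p ! f i}"
  shows "card ((\<Union>i<k. A i) \<inter> set p) = card (f ` {..<k})"
proof -
  have "(\<Union>i<k. A i) \<inter> set p = (!) p ` f ` {..<k}" using assms(3) by auto
  moreover have "inj_on ((!) p) (f ` {..<k})" using assms(1,2) by (intro inj_on_nth) auto
  ultimately show ?thesis by (simp add: card_image)
qed

lemma card_image_atMost_Suc_mono:
  fixes f :: "nat \<Rightarrow> 'a::linorder"
  assumes "mono_on {..Suc n} f"
  shows "card (f ` {..Suc n}) = card (f ` {..n}) + of_bool (f n < f (Suc n))"
proof -
  have "f (Suc n) \<in> f ` {..n} \<longleftrightarrow> \<not> f n < f (Suc n)"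
  proof
    assume "f (Suc n) \<in> f ` {..n}"
    then obtain j where "j \<le> n" "f (Suc n) = f j" by auto
    then show "\<not> f n < f (Suc n)" using mono_onD[OF assms, of j n] by simp
  next
    assume "\<not> f n < f (Suc n)"
    then have "f (Suc n) = f n" using mono_onD[OF assms, of n "Suc n"] by simp
    then show "f (Suc n) \<in> f ` {..n}" by auto
  qed
  then show ?thesis by (simp add: atMost_Suc card_insert_if)
qed

lemma card_image_max_min_atMost:
  fixes a b :: "nat \<Rightarrow> 'a::linorder"
  assumes "mono_on {..n} a" "mono_on {..n} b"
  shows "card (a ` {..n}) + card (b ` {..n}) \<le>
    card ((\<lambda>i. max (a i) (b i)) ` {..n}) + card ((\<lambda>i. min (a i) (b i)) ` {..n})"
  using assms
proof (induction n)
  case (Suc n)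
  let ?max = "\<lambda>i. max (a i) (b i)" and ?min = "\<lambda>i. min (a i) (b i)"
  have "mono_on {..Suc n} ?max" "mono_on {..Suc n} ?min"
    using Suc.prems by (auto intro!: mono_onI max.mono min.mono dest: mono_onD)
  moreover have "card (a ` {..n}) + card (b ` {..n}) \<le> card (?max ` {..n}) + card (?min ` {..n})"
    using Suc.IH Suc.prems by (meson atMost_subset_iff le_SucI mono_on_subset order_refl)
  moreover have "a n \<le> a (Suc n)" "b n \<le> b (Suc n)"
    using mono_onD[OF Suc.prems(1), of n "Suc n"] mono_onD[OF Suc.prems(2), of n "Suc n"] by simp_all
  then have step: "of_bool (a n < a (Suc n)) + of_bool (b n < b (Suc n)) \<le>
      of_bool (?max n < ?max (Suc n)) + (of_bool (?min n < ?min (Suc n)) :: nat)"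
    by (auto simp: max_def min_def)
  ultimately show ?case
    using Suc.prems step by (simp add: card_image_atMost_Suc_mono)
qed simp

lemma card_image_max_min_lessThan:
  fixes a b :: "nat \<Rightarrow> 'a::linorder"
  assumes "mono_on {..<k} a" "mono_on {..<k} b"
  shows "card (a ` {..<k}) + card (b ` {..<k}) \<le>
    card ((\<lambda>i. max (a i) (b i)) ` {..<k}) + card ((\<lambda>i. min (a i) (b i)) ` {..<k})"
  using assms by (cases k) (simp_all add: lessThan_Suc_atMost card_image_max_min_atMost)

section \<open>Paths and unit flows\<close>

fun walk :: "('e \<Rightarrow> 'v) \<Rightarrow> ('e \<Rightarrow> 'v) \<Rightarrow> 'v \<Rightarrow> 'e list \<Rightarrow> 'v \<Rightarrow> bool" where
  "walk src tgt u [] v \<longleftrightarrow> u = v"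
| "walk src tgt u (e # es) v \<longleftrightarrow> src e = u \<and> walk src tgt (tgt e) es v"

lemma walk_iff_nth:
  assumes "p \<noteq> []"
  shows "walk src tgt u p v \<longleftrightarrow>
    src (p ! 0) = u \<and> tgt (last p) = v \<and> (\<forall>i. Suc i < length p \<longrightarrow> tgt (p ! i) = src (p ! Suc i))"
  using assms
proof (induction p arbitrary: u)
  case (Cons e es)
  show ?case
  proof (cases "es = []")
    case False
    let ?chain = "\<lambda>q. \<forall>i. Suc i < length q \<longrightarrow> tgt (q ! i) = src (q ! Suc i)"
    have "?chain (e # es) \<longleftrightarrow> tgt e = src (es ! 0) \<and> ?chain es"
    proof
      assume chain: "?chain (e # es)"
      show "tgt e = src (es ! 0) \<and> ?chain es"
        using chain[rule_format, of 0] chain[rule_format, of "Suc _"] False by auto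
    next
      assume tail: "tgt e = src (es ! 0) \<and> ?chain es"
      show "?chain (e # es)"
      proof (intro allI impI)
        fix i assume "Suc i < length (e # es)"
        then show "tgt ((e # es) ! i) = src ((e # es) ! Suc i)"
          using tail by (cases i) auto
      qed
    qed
    then show ?thesis
      using False Cons.IH[OF False, of "tgt e"] by auto
  qed simp
qed simp

lemma is_path_iff_walk:
  "is_path E src tgt s t p \<longleftrightarrow>
     p \<noteq> [] \<and> set p \<subseteq> E \<and> walk src tgt s p t \<and> distinct (s # map tgt p)"
  unfolding is_path_def by (auto simp: walk_iff_nth; force)

lemma is_path_distinct: "is_path E src tgt s t p \<Longrightarrow> distinct p"
  unfolding is_path_def by (auto simp: distinct_map)

lemma is_path_mono: "is_path F src tgt s t p \<Longrightarrow> F \<subseteq> E \<Longrightarrow> is_path E src tgt s t p"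
  unfolding is_path_def by auto

lemma is_path_imp_neq: "is_path E src tgt s t p \<Longrightarrow> s \<noteq> t"
  unfolding is_path_def by (metis distinct.simps(2) last_in_set last_map list.map_disc_iff)

lemma walk_exits_set:
  "walk src tgt u p v \<Longrightarrow> u \<in> R \<Longrightarrow> v \<notin> R \<Longrightarrow> \<exists>e\<in>set p. src e \<in> R \<and> tgt e \<notin> R"
  by (induction p arbitrary: u) auto

lemma walk_of_rtrancl_path:
  assumes "rtrancl_path (\<lambda>u v. \<exists>e\<in>F. src e = u \<and> tgt e = v) u xs v"
  shows "\<exists>p. walk src tgt u p v \<and> map tgt p = xs \<and> set p \<subseteq> F"
  using assms
proof induction
  case (step x y ys z)
  then obtain p e where "walk src tgt y p z" "map tgt p = ys" "set p \<subseteq> F"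
    and "e \<in> F" "src e = x" "tgt e = y"
    by blast
  then show ?case by (intro exI[of _ "e # p"]) auto
qed (intro exI[of _ "[]"], auto)

lemma finite_rtranclp_reachable:
  assumes "finite S" "\<And>u v. r u v \<Longrightarrow> v \<in> S"
  shows "finite {v. r\<^sup>*\<^sup>* s v}"
proof (rule finite_subset)
  show "{v. r\<^sup>*\<^sup>* s v} \<subseteq> insert s S"
  proof
    fix v assume "v \<in> {v. r\<^sup>*\<^sup>* s v}"
    then have "r\<^sup>*\<^sup>* s v" by simp
    then show "v \<in> insert s S" by (induction rule: rtranclp_induct) (auto dest: assms(2))
  qed
qed (use assms(1) in simp)

lemma disjoint_paths_finite:
  assumes "finite E" "disjoint_paths E src tgt s t P"
  shows "finite P"
proof (rule finite_subset)
  show "P \<subseteq> {p. set p \<subseteq> E \<and> distinct p}"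
  proof
    fix p assume "p \<in> P"
    then have path: "is_path E src tgt s t p" using assms(2) by (simp add: disjoint_paths_def)
    then have "distinct p" by (rule is_path_distinct)
    moreover have "set p \<subseteq> E" using path by (simp add: is_path_def)
    ultimately show "p \<in> {p. set p \<subseteq> E \<and> distinct p}" by simp
  qed
qed (rule finite_subset_distinct[OF assms(1)])

lemma disjoint_paths_disjoint_family:
  "disjoint_paths E src tgt s t P \<Longrightarrow> disjoint_family_on set P"
  unfolding disjoint_paths_def disjoint_family_on_def by blast

definition net_out :: "('e \<Rightarrow> 'v) \<Rightarrow> ('e \<Rightarrow> 'v) \<Rightarrow> 'e set \<Rightarrow> 'v \<Rightarrow> int" where
  "net_out src tgt F x = (\<Sum>e\<in>F. of_bool (src e = x) - of_bool (tgt e = x))"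

definition flow_conservation :: "('e \<Rightarrow> 'v) \<Rightarrow> ('e \<Rightarrow> 'v) \<Rightarrow> 'v \<Rightarrow> 'v \<Rightarrow> 'e set \<Rightarrow> bool" where
  "flow_conservation src tgt s t F \<longleftrightarrow> (\<forall>v. v \<noteq> s \<longrightarrow> v \<noteq> t \<longrightarrow> net_out src tgt F v = 0)"

lemma net_out_walk:
  "walk src tgt u p v \<Longrightarrow> distinct p \<Longrightarrow> net_out src tgt (set p) x = of_bool (x = u) - of_bool (x = v)"
  by (induction p arbitrary: u) (auto simp: net_out_def)

lemma net_out_insert:
  "finite F \<Longrightarrow> e \<notin> F \<Longrightarrow>
    net_out src tgt (insert e F) x = net_out src tgt F x + of_bool (src e = x) - of_bool (tgt e = x)"
  by (simp add: net_out_def)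

lemma net_out_Diff_singleton:
  "finite F \<Longrightarrow> e \<in> F \<Longrightarrow>
    net_out src tgt (F - {e}) x = net_out src tgt F x - of_bool (src e = x) + of_bool (tgt e = x)"
  by (simp add: net_out_def sum_diff1)

lemma net_out_Diff:
  "finite F \<Longrightarrow> A \<subseteq> F \<Longrightarrow> net_out src tgt (F - A) x = net_out src tgt F x - net_out src tgt A x"
  by (simp add: net_out_def sum_diff finite_subset)

lemma net_out_source_eq_crossing:
  assumes "finite R" "s \<in> R" "t \<notin> R" "finite F" "flow_conservation src tgt s t F"
  shows "net_out src tgt F s = (\<Sum>e\<in>F. of_bool (src e \<in> R) - of_bool (tgt e \<in> R))"
proof -
  have "(\<Sum>v\<in>R - {s}. net_out src tgt F v) = 0"
    using assms(3,5) by (intro sum.neutral) (auto simp: flow_conservation_def)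
  then have "net_out src tgt F s = (\<Sum>v\<in>R. net_out src tgt F v)"
    using assms(1,2) by (simp add: sum.remove)
  also have "\<dots> = (\<Sum>e\<in>F. \<Sum>v\<in>R. of_bool (src e = v) - of_bool (tgt e = v))"
    unfolding net_out_def by (rule sum.swap)
  also have "\<dots> = (\<Sum>e\<in>F. of_bool (src e \<in> R) - of_bool (tgt e \<in> R))"
  proof (rule sum.cong)
    fix e
    have "(\<Sum>v\<in>R. of_bool (x = v) :: int) = of_bool (x \<in> R)" for x
      using assms(1) by (simp add: of_bool_def sum.delta)
    then show "(\<Sum>v\<in>R. of_bool (src e = v) - of_bool (tgt e = v)) =
        (of_bool (src e \<in> R) - of_bool (tgt e \<in> R) :: int)"
      by (simp add: sum_subtractf)
  qed simp
  finally show ?thesis .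
qed

lemma conservative_flow_has_path:
  assumes "finite F" "flow_conservation src tgt s t F" "net_out src tgt F s \<ge> 1" "s \<noteq> t"
  shows "\<exists>p. is_path F src tgt s t p"
proof -
  let ?r = "\<lambda>u v. \<exists>e\<in>F. src e = u \<and> tgt e = v"
  define R where "R = {v. ?r\<^sup>*\<^sup>* s v}"
  have "finite R"
    unfolding R_def by (rule finite_rtranclp_reachable[of "tgt ` F"]) (use assms(1) in auto)
  have "s \<in> R" by (simp add: R_def)
  have "t \<in> R"
  proof (rule ccontr)
    assume "t \<notin> R"
    have "net_out src tgt F s = (\<Sum>e\<in>F. of_bool (src e \<in> R) - of_bool (tgt e \<in> R))"
      using \<open>finite R\<close> \<open>s \<in> R\<close> \<open>t \<notin> R\<close> assms(1,2) by (rule net_out_source_eq_crossing)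
    also have "\<dots> \<le> 0"
    proof (rule sum_nonpos)
      fix e assume "e \<in> F"
      then have "src e \<in> R \<Longrightarrow> tgt e \<in> R"
        unfolding R_def by (auto intro: rtranclp.rtrancl_into_rtrancl)
      then show "(of_bool (src e \<in> R) - of_bool (tgt e \<in> R) :: int) \<le> 0" by auto
    qed
    finally show False using assms(3) by simp
  qed
  then have "?r\<^sup>*\<^sup>* s t" by (simp add: R_def)
  then obtain xs where "rtrancl_path ?r s xs t"
    by (auto simp: rtranclp_eq_rtrancl_path)
  then obtain xs' where xs': "rtrancl_path ?r s xs' t" "distinct (s # xs')"
    by (rule rtrancl_path_distinct)
  obtain p where p: "walk src tgt s p t" "map tgt p = xs'" "set p \<subseteq> F"
    using walk_of_rtrancl_path[OF xs'(1)] by blast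
  have "p \<noteq> []" using p(1) assms(4) by (cases p) auto
  then show ?thesis using p xs'(2) by (auto simp: is_path_iff_walk)
qed

lemma flow_decomposition:
  assumes "s \<noteq> t" "finite F" "flow_conservation src tgt s t F" "net_out src tgt F s = int n"
  shows "\<exists>Q. disjoint_paths F src tgt s t Q \<and> card Q = n"
  using assms(2-4)
proof (induction n arbitrary: F)
  case 0
  show ?case by (intro exI[of _ "{}"]) (auto simp: disjoint_paths_def)
next
  case (Suc n)
  obtain p where p: "is_path F src tgt s t p"
    using conservative_flow_has_path[OF Suc.prems(1,2) _ assms(1)] Suc.prems(3) by auto
  then have "walk src tgt s p t" "set p \<subseteq> F" "p \<noteq> []" "distinct p"
    by (auto simp: is_path_iff_walk distinct_map)
  define F' where "F' = F - set p"
  have net_out_F': "net_out src tgt F' x = net_out src tgt F x - (of_bool (x = s) - of_bool (x = t))" for x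
    unfolding F'_def net_out_Diff[OF Suc.prems(1) \<open>set p \<subseteq> F\<close>]
      net_out_walk[OF \<open>walk src tgt s p t\<close> \<open>distinct p\<close>] ..
  have "finite F'" using Suc.prems(1) by (simp add: F'_def)
  moreover have "flow_conservation src tgt s t F'"
    using Suc.prems(2) net_out_F' by (simp add: flow_conservation_def)
  moreover have "net_out src tgt F' s = int n" using Suc.prems(3) net_out_F' assms(1) by simp
  ultimately obtain Q where Q: "disjoint_paths F' src tgt s t Q" "card Q = n"
    using Suc.IH by blast
  have "finite Q" using disjoint_paths_finite[OF \<open>finite F'\<close> Q(1)] .
  have in_F': "set q \<subseteq> F'" if "q \<in> Q" for q
    using Q(1) that by (auto simp: disjoint_paths_def is_path_def)
  have "p \<notin> Q"
  proof
    assume "p \<in> Q"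
    then have "set p \<subseteq> F - set p" using in_F' by (simp add: F'_def)
    with \<open>p \<noteq> []\<close> show False by (meson Diff_iff hd_in_set subsetD)
  qed
  have "disjoint_paths F src tgt s t (insert p Q)"
    using Q(1) p in_F' unfolding disjoint_paths_def F'_def by (auto intro: is_path_mono)
  then show ?case using Q(2) \<open>finite Q\<close> \<open>p \<notin> Q\<close> by (intro exI[of _ "insert p Q"]) auto
qed

section \<open>Menger's theorem\<close>

definition residual :: "'e set \<Rightarrow> ('e \<Rightarrow> 'v) \<Rightarrow> ('e \<Rightarrow> 'v) \<Rightarrow> 'e set \<Rightarrow> 'v \<Rightarrow> 'v \<Rightarrow> bool" where
  "residual E src tgt F u v \<longleftrightarrow>
     (\<exists>e\<in>E - F. src e = u \<and> tgt e = v) \<or> (\<exists>e\<in>F. tgt e = u \<and> src e = v)"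

text \<open>Flipping the edges of a simple residual path. Since the path visits each vertex once and A
  only touches vertices already visited, the next edge is never in A.\<close>

lemma augmenting_path:
  assumes "rtrancl_path (residual E src tgt F) u xs v" "distinct (u # xs)" "F \<subseteq> E" "finite E"
  shows "\<exists>A\<subseteq>E. (\<forall>e\<in>A. src e \<in> set (u # xs) \<and> tgt e \<in> set (u # xs)) \<and>
    (\<forall>x. net_out src tgt (sym_diff F A) x = net_out src tgt F x + of_bool (x = u) - of_bool (x = v))"
  using assms(1,2)
proof induction
  case (base x)
  show ?case by (intro exI[of _ "{}"]) auto
next
  case (step x y ys z)
  then obtain A where A: "A \<subseteq> E" "\<forall>e\<in>A. src e \<in> set (y # ys) \<and> tgt e \<in> set (y # ys)"
    "\<forall>w. net_out src tgt (sym_diff F A) w = net_out src tgt F w + of_bool (w = y) - of_bool (w = z)"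
    by auto
  have "x \<notin> set (y # ys)" using step.prems by auto
  have fin: "finite (sym_diff F A)" using A(1) assms(3,4) by (meson finite_Un finite_Diff finite_subset)
  from step.hyps(1) show ?case
    unfolding residual_def
  proof (elim disjE bexE conjE)
    fix e assume e: "e \<in> E - F" "src e = x" "tgt e = y"
    then have "e \<notin> A" using A(2) \<open>x \<notin> set (y # ys)\<close> by auto
    then have "sym_diff F (insert e A) = insert e (sym_diff F A)" "e \<notin> sym_diff F A"
      using e by auto
    then show ?thesis
      using A e by (intro exI[of _ "insert e A"]) (auto simp: net_out_insert[OF fin])
  next
    fix e assume e: "e \<in> F" "tgt e = x" "src e = y"
    then have "e \<notin> A" using A(2) \<open>x \<notin> set (y # ys)\<close> by auto
    then have "sym_diff F (insert e A) = sym_diff F A - {e}" "e \<in> sym_diff F A"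
      using e by auto
    then show ?thesis
      using A e assms(3) by (intro exI[of _ "insert e A"]) (auto simp: net_out_Diff_singleton[OF fin])
  qed
qed

lemma maximum_flow_exists:
  assumes "finite E"
  obtains F where "F \<subseteq> E" "flow_conservation src tgt s t F"
    "\<And>G. G \<subseteq> E \<Longrightarrow> flow_conservation src tgt s t G \<Longrightarrow> net_out src tgt G s \<le> net_out src tgt F s"
proof -
  let ?flows = "{F. F \<subseteq> E \<and> flow_conservation src tgt s t F}"
  have "?flows \<subseteq> Pow E" by auto
  then have "finite ?flows" by (rule finite_subset) (simp add: assms)
  moreover have "{} \<in> ?flows" by (simp add: flow_conservation_def net_out_def)
  ultimately obtain F where "is_arg_min (\<lambda>F. - net_out src tgt F s) (\<lambda>F. F \<in> ?flows) F"
    using ex_is_arg_min_if_finite[of ?flows "\<lambda>F. - net_out src tgt F s"] by blast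
  then show ?thesis using that by (auto simp: is_arg_min_def not_less)
qed

lemma maximum_flow_no_augmenting_path:
  assumes "finite E" "s \<noteq> t" "F \<subseteq> E" "flow_conservation src tgt s t F"
    and maximum: "\<And>G. G \<subseteq> E \<Longrightarrow> flow_conservation src tgt s t G \<Longrightarrow> net_out src tgt G s \<le> net_out src tgt F s"
  shows "\<not> (residual E src tgt F)\<^sup>*\<^sup>* s t"
proof
  assume "(residual E src tgt F)\<^sup>*\<^sup>* s t"
  then obtain xs where "rtrancl_path (residual E src tgt F) s xs t"
    by (auto simp: rtranclp_eq_rtrancl_path)
  then obtain xs' where xs': "rtrancl_path (residual E src tgt F) s xs' t" "distinct (s # xs')"
    by (rule rtrancl_path_distinct)
  obtain A where A: "A \<subseteq> E"
    "\<forall>x. net_out src tgt (sym_diff F A) x = net_out src tgt F x + of_bool (x = s) - of_bool (x = t)"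
    using augmenting_path[OF xs' assms(3,1)] by blast
  have "sym_diff F A \<subseteq> E" using A(1) assms(3) by blast
  moreover have "flow_conservation src tgt s t (sym_diff F A)"
    using A(2) assms(4) by (simp add: flow_conservation_def)
  ultimately have "net_out src tgt (sym_diff F A) s \<le> net_out src tgt F s"
    by (rule maximum)
  then show False using A(2) assms(2) by simp
qed

lemma residual_closed_cut:
  assumes "finite E" "F \<subseteq> E" "flow_conservation src tgt s t F" "finite R" "s \<in> R" "t \<notin> R"
    and closed: "\<And>u v. u \<in> R \<Longrightarrow> residual E src tgt F u v \<Longrightarrow> v \<in> R"
  defines "X \<equiv> {e\<in>E. src e \<in> R \<and> tgt e \<notin> R}"
  shows "is_cut E src tgt s t X" and "int (card X) = net_out src tgt F s"
proof -
  show "is_cut E src tgt s t X"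
    unfolding is_cut_def
  proof (intro conjI allI impI)
    fix p assume "is_path E src tgt s t p"
    then have walk: "walk src tgt s p t" and "set p \<subseteq> E" by (auto simp: is_path_iff_walk)
    obtain e where "e \<in> set p" "src e \<in> R" "tgt e \<notin> R"
      using walk_exits_set[OF walk \<open>s \<in> R\<close> \<open>t \<notin> R\<close>] by blast
    then show "set p \<inter> X \<noteq> {}" using \<open>set p \<subseteq> E\<close> by (auto simp: X_def)
  qed (auto simp: X_def)
  have "X \<subseteq> F"
  proof
    fix e assume "e \<in> X"
    show "e \<in> F"
    proof (rule ccontr)
      assume "e \<notin> F"
      then have "residual E src tgt F (src e) (tgt e)" using \<open>e \<in> X\<close> by (auto simp: residual_def X_def)
      then show False using closed \<open>e \<in> X\<close> by (auto simp: X_def)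
    qed
  qed
  have "finite F" using assms(1,2) by (rule finite_subset[rotated])
  have "net_out src tgt F s = (\<Sum>e\<in>F. of_bool (src e \<in> R) - of_bool (tgt e \<in> R))"
    using assms(4,5,6) \<open>finite F\<close> assms(3) by (rule net_out_source_eq_crossing)
  also have "\<dots> = (\<Sum>e\<in>F. of_bool (e \<in> X))"
  proof (rule sum.cong)
    fix e assume "e \<in> F"
    then have "residual E src tgt F (tgt e) (src e)" by (auto simp: residual_def)
    then have "tgt e \<in> R \<Longrightarrow> src e \<in> R" using closed by blast
    then show "(of_bool (src e \<in> R) - of_bool (tgt e \<in> R) :: int) = of_bool (e \<in> X)"
      using \<open>e \<in> F\<close> assms(2) by (auto simp: X_def)
  qed simp
  also have "\<dots> = int (card X)"
    using \<open>finite F\<close> \<open>X \<subseteq> F\<close> by (simp add: Int_absorb1 Collect_mem_eq)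
  finally show "int (card X) = net_out src tgt F s" ..
qed

lemma flow_value_le_card_max_disjoint_paths:
  assumes "finite E" "s \<noteq> t" "max_disjoint_paths E src tgt s t P"
    and "F \<subseteq> E" "flow_conservation src tgt s t F"
  shows "net_out src tgt F s \<le> int (card P)"
proof (cases "net_out src tgt F s \<ge> 0")
  case True
  have "finite F" using assms(1,4) by (rule finite_subset[rotated])
  moreover have "net_out src tgt F s = int (nat (net_out src tgt F s))" using True by simp
  ultimately obtain Q where Q: "disjoint_paths F src tgt s t Q" "card Q = nat (net_out src tgt F s)"
    using flow_decomposition[OF assms(2) _ assms(5)] by blast
  have "disjoint_paths E src tgt s t Q"
    using Q(1) assms(4) by (auto simp: disjoint_paths_def intro: is_path_mono)
  then show ?thesis using assms(3) Q(2) True by (auto simp: max_disjoint_paths_def)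
qed simp

theorem menger:
  assumes "finite E" "max_disjoint_paths E src tgt s t P"
  shows "\<exists>X. is_cut E src tgt s t X \<and> card X \<le> card P"
proof (cases "s = t")
  case True
  then show ?thesis by (intro exI[of _ "{}"]) (auto simp: is_cut_def dest: is_path_imp_neq)
next
  case False
  obtain F where F: "F \<subseteq> E" "flow_conservation src tgt s t F"
    "\<And>G. G \<subseteq> E \<Longrightarrow> flow_conservation src tgt s t G \<Longrightarrow> net_out src tgt G s \<le> net_out src tgt F s"
    using maximum_flow_exists[OF assms(1), of src tgt s t] by blast
  define R where "R = {v. (residual E src tgt F)\<^sup>*\<^sup>* s v}"
  have "finite R"
    unfolding R_def
    by (rule finite_rtranclp_reachable[of "src ` E \<union> tgt ` E"])
      (use assms(1) F(1) in \<open>auto simp: residual_def\<close>)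
  have "s \<in> R" by (simp add: R_def)
  have "t \<notin> R"
    using maximum_flow_no_augmenting_path[OF assms(1) False F] by (simp add: R_def)
  have closed: "v \<in> R" if "u \<in> R" "residual E src tgt F u v" for u v
    using that unfolding R_def by (auto intro: rtranclp.rtrancl_into_rtrancl)
  let ?X = "{e\<in>E. src e \<in> R \<and> tgt e \<notin> R}"
  have "is_cut E src tgt s t ?X" "int (card ?X) = net_out src tgt F s"
    using residual_closed_cut[OF assms(1) F(1,2) \<open>finite R\<close> \<open>s \<in> R\<close> \<open>t \<notin> R\<close>] closed by blast+
  have "net_out src tgt F s \<le> int (card P)"
    using flow_value_le_card_max_disjoint_paths[OF assms(1) False assms(2) F(1,2)] .
  with \<open>is_cut E src tgt s t ?X\<close> \<open>int (card ?X) = net_out src tgt F s\<close> show ?thesis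
    by (intro exI[of _ ?X]) simp
qed

lemma min_cut_transversal:
  assumes "finite E" "max_disjoint_paths E src tgt s t P" "X \<in> min_cuts E src tgt s t"
  shows "\<exists>g. (\<forall>p\<in>P. g p \<in> set p) \<and> X = g ` P"
proof -
  have paths: "disjoint_paths E src tgt s t P" using assms(2) by (simp add: max_disjoint_paths_def)
  have cut: "is_cut E src tgt s t X" and minimal: "\<And>Y. is_cut E src tgt s t Y \<Longrightarrow> card X \<le> card Y"
    using assms(3) by (auto simp: min_cuts_def)
  have "X \<subseteq> E" using cut by (simp add: is_cut_def)
  then have "finite X" using assms(1) by (rule finite_subset)
  have "\<forall>p\<in>P. \<exists>e. e \<in> set p \<inter> X"
  proof
    fix p assume "p \<in> P"
    then have "is_path E src tgt s t p" using paths by (simp add: disjoint_paths_def)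
    then show "\<exists>e. e \<in> set p \<inter> X" using cut by (auto simp: is_cut_def)
  qed
  then obtain g where g: "\<forall>p\<in>P. g p \<in> set p \<inter> X" by (rule bchoice[elim_format]) blast
  have "inj_on g P"
  proof (rule inj_onI)
    fix p q assume "p \<in> P" "q \<in> P" "g p = g q"
    then have "g p \<in> set p \<inter> set q" using g by (metis IntD1 IntI)
    then show "p = q"
      using disjoint_paths_disjoint_family[OF paths] \<open>p \<in> P\<close> \<open>q \<in> P\<close>
      unfolding disjoint_family_on_def by (metis empty_iff)
  qed
  obtain Y where Y: "is_cut E src tgt s t Y" "card Y \<le> card P" using menger[OF assms(1,2)] by blast
  have "card X \<le> card Y" using minimal[OF Y(1)] .
  also have "\<dots> \<le> card P" by (fact Y(2))
  also have "\<dots> = card (g ` P)" using card_image[OF \<open>inj_on g P\<close>] by simp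
  finally have "card X \<le> card (g ` P)" .
  moreover have "g ` P \<subseteq> X" using g by blast
  ultimately have "g ` P = X" using card_seteq[OF \<open>finite X\<close>] by blast
  then show ?thesis using g by blast
qed

lemma min_cut_subset_paths:
  assumes "finite E" "max_disjoint_paths E src tgt s t P" "X \<in> min_cuts E src tgt s t"
  shows "X \<subseteq> \<Union> (set ` P)"
proof -
  obtain g where "\<forall>p\<in>P. g p \<in> set p" "X = g ` P"
    using min_cut_transversal[OF assms] by (elim exE conjE)
  then show ?thesis by auto
qed

lemma min_cut_Int_path:
  assumes "finite E" "max_disjoint_paths E src tgt s t P" "X \<in> min_cuts E src tgt s t" "p \<in> P"
  shows "\<exists>e. X \<inter> set p = {e}"
proof -
  obtain g where g: "\<forall>p\<in>P. g p \<in> set p" "X = g ` P"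
    using min_cut_transversal[OF assms(1-3)] by (elim exE conjE)
  have "disjoint_paths E src tgt s t P" using assms(2) by (simp add: max_disjoint_paths_def)
  then have "q = p" if "q \<in> P" "g q \<in> set p" for q
    using disjoint_paths_disjoint_family g(1) assms(4) that
    unfolding disjoint_family_on_def by (metis disjoint_iff)
  then have "X \<inter> set p = {g p}"
    using g assms(4) by auto
  then show ?thesis ..
qed

lemma U_lr_positions_on_path:
  assumes "finite E" "max_disjoint_paths E src tgt s t P" "C \<in> U_lr E src tgt s t k" "p \<in> P"
  obtains a where "\<And>i. i < k \<Longrightarrow> a i < length p \<and> C ! i \<inter> set p = {p ! a i}" "mono_on {..<k} a"
proof -
  have C: "length C = k" "\<forall>X\<in>set C. X \<in> min_cuts E src tgt s t"
    "\<And>i j. i < j \<Longrightarrow> j < k \<Longrightarrow> cut_le E src tgt s t (C ! i) (C ! j)"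
    using assms(3) by (auto simp: U_lr_def)
  have path: "is_path E src tgt s t p"
    using assms(2,4) by (auto simp: max_disjoint_paths_def disjoint_paths_def)
  then have "distinct p" by (rule is_path_distinct)
  have "\<exists>j<length p. C ! i \<inter> set p = {p ! j}" if "i < k" for i
  proof -
    have "C ! i \<in> min_cuts E src tgt s t" using C(1,2) that by simp
    then obtain e where e: "C ! i \<inter> set p = {e}"
      using min_cut_Int_path[OF assms(1,2) _ assms(4)] by blast
    then have "e \<in> set p" by blast
    then obtain j where "j < length p" "e = p ! j" by (metis in_set_conv_nth)
    with e show ?thesis by blast
  qed
  then obtain a where a: "\<And>i. i < k \<Longrightarrow> a i < length p \<and> C ! i \<inter> set p = {p ! a i}"
    by metis
  have "a i \<le> a j" if ij: "i < j" "j < k" for i j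
  proof -
    obtain i' where i': "i' < length p" "p ! i' \<in> C ! i" "\<forall>j'<i'. p ! j' \<notin> C ! j"
      using C(3)[OF ij] path by (auto simp: cut_le_def)
    then have "i' = a i" using distinct_nth_mem_iff[OF \<open>distinct p\<close>, of "a i" i'] a[of i] ij by simp
    moreover have "p ! a j \<in> C ! j" using a[of j] ij by auto
    ultimately show ?thesis using i'(3) by (meson not_le)
  qed
  then have "mono_on {..<k} a"
    by (intro mono_onI) (auto simp: le_less)
  with a show ?thesis using that by blast
qed

lemma U_lr_edges_subset_paths:
  assumes "finite E" "max_disjoint_paths E src tgt s t P" "C \<in> U_lr E src tgt s t k"
  shows "edges_of C \<subseteq> \<Union> (set ` P)"
  using assms(3) min_cut_subset_paths[OF assms(1,2)] by (auto simp: edges_of_def U_lr_def)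

section \<open>Join and meet along a path\<close>

lemma S_max_subset: "S_max P Z \<subseteq> \<Union> (set ` P)"
  unfolding S_max_def using last_filter_in_set[where P = "\<lambda>e. e \<in> Z"] by fastforce

lemma S_min_subset: "S_min P Z \<subseteq> \<Union> (set ` P)"
  unfolding S_min_def using hd_filter_in_set[where P = "\<lambda>e. e \<in> Z"] by fastforce

lemma S_max_Int_path:
  assumes "disjoint_family_on set P" "p \<in> P" "set p \<inter> Z \<noteq> {}"
  shows "S_max P Z \<inter> set p = {last (filter (\<lambda>e. e \<in> Z) p)}"
  unfolding S_max_def
  by (rule disjoint_family_on_select_Int[where Q = "\<lambda>q. set q \<inter> Z \<noteq> {}", OF assms])
    (auto intro!: last_filter_in_set)

lemma S_min_Int_path:
  assumes "disjoint_family_on set P" "p \<in> P" "set p \<inter> Z \<noteq> {}"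
  shows "S_min P Z \<inter> set p = {hd (filter (\<lambda>e. e \<in> Z) p)}"
  unfolding S_min_def
  by (rule disjoint_family_on_select_Int[where Q = "\<lambda>q. set q \<inter> Z \<noteq> {}", OF assms])
    (auto intro!: hd_filter_in_set)

lemma S_max_Un_Int_path:
  assumes "disjoint_family_on set P" "p \<in> P" "distinct p" "a < length p" "b < length p"
    and "X \<inter> set p = {p ! a}" "Y \<inter> set p = {p ! b}"
  shows "S_max P (X \<union> Y) \<inter> set p = {p ! max a b}"
proof -
  have "p ! j \<in> X \<union> Y \<longleftrightarrow> j = a \<or> j = b" if "j < length p" for j
    using distinct_nth_mem_iff[OF assms(3) _ that] assms(4-7) by blast
  then have "last (filter (\<lambda>e. e \<in> X \<union> Y) p) = p ! max a b"
    by (intro last_filter_eq_nth) (use assms(4,5) in auto)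
  moreover have "set p \<inter> (X \<union> Y) \<noteq> {}" using assms(6) by blast
  ultimately show ?thesis using S_max_Int_path[OF assms(1,2)] by simp
qed

lemma S_min_Un_Int_path:
  assumes "disjoint_family_on set P" "p \<in> P" "distinct p" "a < length p" "b < length p"
    and "X \<inter> set p = {p ! a}" "Y \<inter> set p = {p ! b}"
  shows "S_min P (X \<union> Y) \<inter> set p = {p ! min a b}"
proof -
  have "p ! j \<in> X \<union> Y \<longleftrightarrow> j = a \<or> j = b" if "j < length p" for j
    using distinct_nth_mem_iff[OF assms(3) _ that] assms(4-7) by blast
  then have "hd (filter (\<lambda>e. e \<in> X \<union> Y) p) = p ! min a b"
    by (intro hd_filter_eq_nth) (use assms(4,5) in auto)
  moreover have "set p \<inter> (X \<union> Y) \<noteq> {}" using assms(6) by blast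
  ultimately show ?thesis using S_min_Int_path[OF assms(1,2)] by simp
qed

lemma edges_of_conv_nth: "edges_of C = (\<Union>i<length C. C ! i)"
  unfolding edges_of_def by (auto simp: set_conv_nth)

lemma edges_of_cjoin:
  "length C1 = length C2 \<Longrightarrow> edges_of (cjoin P C1 C2) = (\<Union>i<length C1. S_max P (C1 ! i \<union> C2 ! i))"
  unfolding edges_of_def cjoin_def by (auto simp: set_zip)

lemma edges_of_cmeet:
  "length C1 = length C2 \<Longrightarrow> edges_of (cmeet P C1 C2) = (\<Union>i<length C1. S_min P (C1 ! i \<union> C2 ! i))"
  unfolding edges_of_def cmeet_def by (auto simp: set_zip)

lemma edges_of_cjoin_subset: "edges_of (cjoin P C1 C2) \<subseteq> \<Union> (set ` P)"
  unfolding edges_of_def cjoin_def by (auto dest: S_max_subset[THEN subsetD])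

lemma edges_of_cmeet_subset: "edges_of (cmeet P C1 C2) \<subseteq> \<Union> (set ` P)"
  unfolding edges_of_def cmeet_def by (auto dest: S_min_subset[THEN subsetD])

lemma card_edges_Int_path_join_meet:
  assumes "finite E" "max_disjoint_paths E src tgt s t P"
    and "C1 \<in> U_lr E src tgt s t k" "C2 \<in> U_lr E src tgt s t k" "p \<in> P"
  shows "card (edges_of C1 \<inter> set p) + card (edges_of C2 \<inter> set p) \<le>
    card (edges_of (cjoin P C1 C2) \<inter> set p) + card (edges_of (cmeet P C1 C2) \<inter> set p)"
proof -
  obtain a where a: "\<And>i. i < k \<Longrightarrow> a i < length p \<and> C1 ! i \<inter> set p = {p ! a i}" "mono_on {..<k} a"
    using U_lr_positions_on_path[OF assms(1,2,3,5)] by blast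
  obtain b where b: "\<And>i. i < k \<Longrightarrow> b i < length p \<and> C2 ! i \<inter> set p = {p ! b i}" "mono_on {..<k} b"
    using U_lr_positions_on_path[OF assms(1,2,4,5)] by blast
  have len: "length C1 = k" "length C2 = k" using assms(3,4) by (simp_all add: U_lr_def)
  have paths: "disjoint_paths E src tgt s t P" using assms(2) by (simp add: max_disjoint_paths_def)
  then have fam: "disjoint_family_on set P" by (rule disjoint_paths_disjoint_family)
  have "is_path E src tgt s t p" using paths assms(5) by (simp add: disjoint_paths_def)
  then have "distinct p" by (rule is_path_distinct)
  have "card (edges_of C1 \<inter> set p) = card (a ` {..<k})"
    unfolding edges_of_conv_nth len(1)
    by (rule card_Int_eq_card_positions) (use \<open>distinct p\<close> a(1) in auto)
  moreover have "card (edges_of C2 \<inter> set p) = card (b ` {..<k})"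
    unfolding edges_of_conv_nth len(2)
    by (rule card_Int_eq_card_positions) (use \<open>distinct p\<close> b(1) in auto)
  moreover have "card (edges_of (cjoin P C1 C2) \<inter> set p) = card ((\<lambda>i. max (a i) (b i)) ` {..<k})"
    unfolding edges_of_cjoin[OF len(1)[folded len(2)]] len(1)
    by (rule card_Int_eq_card_positions)
      (use \<open>distinct p\<close> a(1) b(1) S_max_Un_Int_path[OF fam assms(5) \<open>distinct p\<close>] in auto)
  moreover have "card (edges_of (cmeet P C1 C2) \<inter> set p) = card ((\<lambda>i. min (a i) (b i)) ` {..<k})"
    unfolding edges_of_cmeet[OF len(1)[folded len(2)]] len(1)
    by (rule card_Int_eq_card_positions)
      (use \<open>distinct p\<close> a(1) b(1) S_min_Un_Int_path[OF fam assms(5) \<open>distinct p\<close>] in \<open>auto simp: min_def\<close>)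
  ultimately show ?thesis using card_image_max_min_lessThan[OF a(2) b(2)] by simp
qed

theorem claim2:
  fixes E :: "'e set" and src tgt :: "'e \<Rightarrow> 'v" and s t :: 'v and k :: nat
    and P :: "'e list set" and C1 C2 :: "'e set list"
  assumes "finite E"
    and "k \<ge> 1"
    and "max_disjoint_paths E src tgt s t P"
    and "C1 \<in> U_lr E src tgt s t k" and "C2 \<in> U_lr E src tgt s t k"
  shows "card (edges_of (cjoin P C1 C2)) + card (edges_of (cmeet P C1 C2))
           \<ge> card (edges_of C1) + card (edges_of C2)"
proof -
  have paths: "disjoint_paths E src tgt s t P" using assms(3) by (simp add: max_disjoint_paths_def)
  have split: "card Z = (\<Sum>p\<in>P. card (Z \<inter> set p))" if "Z \<subseteq> \<Union> (set ` P)" for Z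
    using disjoint_paths_finite[OF assms(1) paths] disjoint_paths_disjoint_family[OF paths] _ that
    by (rule card_eq_sum_card_Int_disjoint_family) simp
  have "card (edges_of C1) + card (edges_of C2) =
      (\<Sum>p\<in>P. card (edges_of C1 \<inter> set p) + card (edges_of C2 \<inter> set p))"
    using split[OF U_lr_edges_subset_paths[OF assms(1,3,4)]] split[OF U_lr_edges_subset_paths[OF assms(1,3,5)]]
    by (simp add: sum.distrib)
  also have "\<dots> \<le> (\<Sum>p\<in>P. card (edges_of (cjoin P C1 C2) \<inter> set p) + card (edges_of (cmeet P C1 C2) \<inter> set p))"
    by (intro sum_mono card_edges_Int_path_join_meet[OF assms(1,3-5)])
  also have "\<dots> = card (edges_of (cjoin P C1 C2)) + card (edges_of (cmeet P C1 C2))"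
    using split[OF edges_of_cjoin_subset] split[OF edges_of_cmeet_subset] by (simp add: sum.distrib)
  finally show ?thesis .
qed

end
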